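(* Let $L,M$ be distributive lattices and $T:\mathrm{FBL}\langle L\rangle\to\mathrm{FBL}\langle M\rangle$ a (linear) lattice homomorphism. For $y^*\in M^*$ define $\Phi_T(y^* ):L\to\mathbb R$ by $\Phi_T(y^* )(x)=(T\delta_x)(y^* )$. Then: (1) for every $y^*\in M^*$, $\Phi_T(y^* )$ is a lattice homomorphism $L\to\mathbb R$; (2) $|\Phi_T(y^* )(x)|\le\|T\|$ for all $y^*\in M^*$, $x\in L$; in particular, if $\|T\|\le1$ then $\Phi_T(M^* )\subseteq L^*$; (3) $\Phi_T$ is positively homogeneous: if $y^*\in M^*$, $\lambda\ge0$ and $\lambda y^*\in M^*$, then $\Phi_T(\lambda y^* )=\lambda\Phi_T(y^* )$; (4) if $\|T\|\le1$, then $(Tf)(y^* )=f(\Phi_T(y^* ))$ for every $f\in\mathrm{FBL}\langle L\rangle$ and $y^*\in M^*$.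
   Context: For a distributive lattice $L$, $L^*$ is the set of all lattice homomorphisms $x^*:L\to[-1,1]$; for $x\in L$, $\delta_x:L^*\to\mathbb R$ is $\delta_x(x^* )=x^*(x)$. A function $f:L^*\to\mathbb R$ is positively homogeneous if $f(\lambda x^* )=\lambda f(x^* )$ whenever $\lambda\ge0$ and $\lambda x^*\in L^*$; for such $f$, $\|f\|=\sup\{\sum_{i=1}^m|f(x_i^* )|: m\in\mathbb N,\ x_i^*\in L^*,\ \sup_{x\in L}\sum_{i=1}^m|x_i^*(x)|\le1\}$. $\mathrm{FBL}\langle L\rangle$ is the norm closure of the vector sublattice generated by $\{\delta_x:x\in L\}$ inside the Banach lattice of positively homogeneous functions on $L^*$ with finite norm, with pointwise order and operations (so its elements are functions on $L^*$ and point evaluations are continuous). *)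

theory Defs
  imports Complex_Main
begin

definition lattice_hom_real :: "('a::lattice \<Rightarrow> real) \<Rightarrow> bool" where
  "lattice_hom_real f \<longleftrightarrow>
     (\<forall>x y. f (inf x y) = min (f x) (f y) \<and> f (sup x y) = max (f x) (f y))"

definition lstar :: "('a::distrib_lattice \<Rightarrow> real) set" where
  "lstar = {xs. lattice_hom_real xs \<and> (\<forall>x. \<bar>xs x\<bar> \<le> 1)}"

text \<open>Functions on L^* are represented as functions on all of 'a \<Rightarrow> real which vanish
  outside L^* (the values outside L^* carry no information).\<close>
definition delta :: "'a::distrib_lattice \<Rightarrow> ('a \<Rightarrow> real) \<Rightarrow> real" where
  "delta x = (\<lambda>xs. if xs \<in> lstar then xs x else 0)"

definition pos_hom :: "(('a::distrib_lattice \<Rightarrow> real) \<Rightarrow> real) \<Rightarrow> bool" where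
  "pos_hom f \<longleftrightarrow>
     (\<forall>xs\<in>lstar. \<forall>c::real. c \<ge> 0 \<longrightarrow> (\<lambda>x. c * xs x) \<in> lstar \<longrightarrow> f (\<lambda>x. c * xs x) = c * f xs)
     \<and> (\<forall>xs. xs \<notin> lstar \<longrightarrow> f xs = 0)"

definition fbl_sums :: "(('a::distrib_lattice \<Rightarrow> real) \<Rightarrow> real) \<Rightarrow> real set" where
  "fbl_sums f = {(\<Sum>i<m. \<bar>f (xs i)\<bar>) | (m::nat) xs.
      (\<forall>i<m. xs i \<in> lstar) \<and> (\<forall>x. (\<Sum>i<m. \<bar>xs i x\<bar>) \<le> 1)}"

definition fbl_norm :: "(('a::distrib_lattice \<Rightarrow> real) \<Rightarrow> real) \<Rightarrow> real" where
  "fbl_norm f = Sup (fbl_sums f)"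

definition has_finite_norm :: "(('a::distrib_lattice \<Rightarrow> real) \<Rightarrow> real) \<Rightarrow> bool" where
  "has_finite_norm f \<longleftrightarrow> bdd_above (fbl_sums f)"

inductive_set fbl_gen :: "(('a::distrib_lattice \<Rightarrow> real) \<Rightarrow> real) set" where
  gen_delta: "delta x \<in> fbl_gen"
| gen_zero: "(\<lambda>_. 0) \<in> fbl_gen"
| gen_add: "f \<in> fbl_gen \<Longrightarrow> g \<in> fbl_gen \<Longrightarrow> (\<lambda>xs. f xs + g xs) \<in> fbl_gen"
| gen_scale: "f \<in> fbl_gen \<Longrightarrow> (\<lambda>xs. c * f xs) \<in> fbl_gen"
| gen_sup: "f \<in> fbl_gen \<Longrightarrow> g \<in> fbl_gen \<Longrightarrow> (\<lambda>xs. max (f xs) (g xs)) \<in> fbl_gen"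
| gen_inf: "f \<in> fbl_gen \<Longrightarrow> g \<in> fbl_gen \<Longrightarrow> (\<lambda>xs. min (f xs) (g xs)) \<in> fbl_gen"

definition FBL :: "(('a::distrib_lattice \<Rightarrow> real) \<Rightarrow> real) set" where
  "FBL = {f. pos_hom f \<and> has_finite_norm f \<and>
            (\<forall>e>0. \<exists>g\<in>fbl_gen. fbl_norm (\<lambda>xs. f xs - g xs) < e)}"

definition fbl_lattice_hom ::
  "((('a::distrib_lattice \<Rightarrow> real) \<Rightarrow> real) \<Rightarrow> (('b::distrib_lattice \<Rightarrow> real) \<Rightarrow> real)) \<Rightarrow> bool" where
  "fbl_lattice_hom T \<longleftrightarrow>
     (\<forall>f\<in>FBL. T f \<in> FBL)
   \<and> (\<forall>f\<in>FBL. \<forall>g\<in>FBL. T (\<lambda>xs. f xs + g xs) = (\<lambda>ys. T f ys + T g ys))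
   \<and> (\<forall>f\<in>FBL. \<forall>c::real. T (\<lambda>xs. c * f xs) = (\<lambda>ys. c * T f ys))
   \<and> (\<forall>f\<in>FBL. \<forall>g\<in>FBL. T (\<lambda>xs. max (f xs) (g xs)) = (\<lambda>ys. max (T f ys) (T g ys)))
   \<and> (\<forall>f\<in>FBL. \<forall>g\<in>FBL. T (\<lambda>xs. min (f xs) (g xs)) = (\<lambda>ys. min (T f ys) (T g ys)))"

definition op_bounded ::
  "((('a::distrib_lattice \<Rightarrow> real) \<Rightarrow> real) \<Rightarrow> (('b::distrib_lattice \<Rightarrow> real) \<Rightarrow> real)) \<Rightarrow> bool" where
  "op_bounded T \<longleftrightarrow> (\<exists>K. \<forall>f\<in>(FBL::(('a \<Rightarrow> real) \<Rightarrow> real) set). fbl_norm (T f) \<le> K * fbl_norm f)"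

definition op_norm ::
  "((('a::distrib_lattice \<Rightarrow> real) \<Rightarrow> real) \<Rightarrow> (('b::distrib_lattice \<Rightarrow> real) \<Rightarrow> real)) \<Rightarrow> real" where
  "op_norm T = Sup {fbl_norm (T f) | f. f \<in> (FBL::(('a \<Rightarrow> real) \<Rightarrow> real) set) \<and> fbl_norm f \<le> 1}"

definition Phi ::
  "((('a::distrib_lattice \<Rightarrow> real) \<Rightarrow> real) \<Rightarrow> (('b::distrib_lattice \<Rightarrow> real) \<Rightarrow> real))
   \<Rightarrow> ('b \<Rightarrow> real) \<Rightarrow> 'a \<Rightarrow> real" where
  "Phi T ys = (\<lambda>x. T (delta x) ys)"

end

theory Submission
  imports Defs
begin

text \<open>Evaluation at a point of \<open>L\<^sup>*\<close> is bounded by the norm, so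
  \<open>f \<mapsto> (T f)(y\<^sup>*)\<close> is a bounded linear lattice homomorphism on \<open>FBL\<langle>L\<rangle>\<close>.
  It maps \<open>\<delta>\<^sub>x\<close> to \<open>\<Phi>\<^sub>T(y\<^sup>*)(x)\<close>, which gives (1)--(3) directly, because
  \<open>\<delta>\<^bsub>x \<sqinter> y\<^esub> = \<delta>\<^sub>x \<sqinter> \<delta>\<^sub>y\<close>, \<open>\<delta>\<^bsub>x \<squnion> y\<^esub> = \<delta>\<^sub>x \<squnion> \<delta>\<^sub>y\<close>, \<open>\<parallel>\<delta>\<^sub>x\<parallel> \<le> 1\<close> and
  \<open>T \<delta>\<^sub>x\<close> is positively homogeneous. If \<open>\<parallel>T\<parallel> \<le> 1\<close>, then \<open>\<Phi>\<^sub>T(y\<^sup>*) \<in> L\<^sup>*\<close> and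
  \<open>f \<mapsto> f(\<Phi>\<^sub>T(y\<^sup>*))\<close> is another such functional with the same values on the
  \<open>\<delta>\<^sub>x\<close>; the two agree on the vector sublattice generated by the \<open>\<delta>\<^sub>x\<close>, and by
  continuity on its closure \<open>FBL\<langle>L\<rangle>\<close>, which is (4).\<close>

lemma fbl_sumsI:
  fixes m :: nat
  assumes "\<forall>i<m. xs i \<in> lstar" and "\<forall>x. (\<Sum>i<m. \<bar>xs i x\<bar>) \<le> 1"
  shows "(\<Sum>i<m. \<bar>f (xs i)\<bar>) \<in> fbl_sums f"
  using assms unfolding fbl_sums_def by blast

lemma fbl_sumsE:
  assumes "s \<in> fbl_sums f"
  obtains m :: nat and xs where "s = (\<Sum>i<m. \<bar>f (xs i)\<bar>)" and "\<forall>i<m. xs i \<in> lstar"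
    and "\<forall>x. (\<Sum>i<m. \<bar>xs i x\<bar>) \<le> 1"
  using assms unfolding fbl_sums_def by blast

lemma zero_in_fbl_sums: "0 \<in> fbl_sums f"
  using fbl_sumsI[of 0] by simp

lemma fbl_norm_nonneg: "has_finite_norm f \<Longrightarrow> 0 \<le> fbl_norm f"
  unfolding fbl_norm_def has_finite_norm_def by (rule cSup_upper[OF zero_in_fbl_sums])

lemma abs_le_fbl_norm:
  assumes "xs \<in> lstar" and "has_finite_norm f"
  shows "\<bar>f xs\<bar> \<le> fbl_norm f"
proof -
  have "\<bar>f xs\<bar> \<in> fbl_sums f"
    using fbl_sumsI[of 1 "\<lambda>_. xs" f] assms(1) by (auto simp: lstar_def)
  then show ?thesis
    using assms(2) unfolding fbl_norm_def has_finite_norm_def by (simp add: cSup_upper)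
qed

lemma fbl_sums_dominated:
  assumes "has_finite_norm f" "has_finite_norm g" "0 \<le> a" "0 \<le> b"
    and "\<forall>xs. \<bar>h xs\<bar> \<le> a * \<bar>f xs\<bar> + b * \<bar>g xs\<bar>"
    and "s \<in> fbl_sums h"
  shows "s \<le> a * fbl_norm f + b * fbl_norm g"
proof -
  obtain m :: nat and xs where s: "s = (\<Sum>i<m. \<bar>h (xs i)\<bar>)"
    and admissible: "\<forall>i<m. xs i \<in> lstar" "\<forall>x. (\<Sum>i<m. \<bar>xs i x\<bar>) \<le> 1"
    using assms(6) by (rule fbl_sumsE)
  have "s \<le> (\<Sum>i<m. a * \<bar>f (xs i)\<bar> + b * \<bar>g (xs i)\<bar>)"
    unfolding s by (rule sum_mono) (use assms(5) in auto)
  also have "\<dots> = a * (\<Sum>i<m. \<bar>f (xs i)\<bar>) + b * (\<Sum>i<m. \<bar>g (xs i)\<bar>)"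
    by (simp add: sum.distrib sum_distrib_left)
  also have "\<dots> \<le> a * fbl_norm f + b * fbl_norm g"
    using cSup_upper[OF fbl_sumsI[OF admissible]] assms(1-4)
    unfolding fbl_norm_def has_finite_norm_def by (intro add_mono mult_left_mono) auto
  finally show ?thesis .
qed

lemma
  assumes "has_finite_norm f" "has_finite_norm g" "0 \<le> a" "0 \<le> b"
    and "\<forall>xs. \<bar>h xs\<bar> \<le> a * \<bar>f xs\<bar> + b * \<bar>g xs\<bar>"
  shows has_finite_norm_dominated: "has_finite_norm h"
    and fbl_norm_dominated: "fbl_norm h \<le> a * fbl_norm f + b * fbl_norm g"
proof -
  show "has_finite_norm h"
    unfolding has_finite_norm_def using fbl_sums_dominated[OF assms] by (rule bdd_aboveI)
  show "fbl_norm h \<le> a * fbl_norm f + b * fbl_norm g"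
    unfolding fbl_norm_def[of h] using zero_in_fbl_sums fbl_sums_dominated[OF assms]
    by (blast intro: cSup_least)
qed

lemma has_finite_norm_add:
  "has_finite_norm f \<Longrightarrow> has_finite_norm g \<Longrightarrow> has_finite_norm (\<lambda>xs. f xs + g xs)"
  by (rule has_finite_norm_dominated[of f g 1 1]) (auto intro: abs_triangle_ineq)

lemma has_finite_norm_diff:
  "has_finite_norm f \<Longrightarrow> has_finite_norm g \<Longrightarrow> has_finite_norm (\<lambda>xs. f xs - g xs)"
  by (rule has_finite_norm_dominated[of f g 1 1]) (auto intro: abs_triangle_ineq4)

lemma has_finite_norm_scale: "has_finite_norm f \<Longrightarrow> has_finite_norm (\<lambda>xs. c * f xs)"
  by (rule has_finite_norm_dominated[of f f "\<bar>c\<bar>" 0]) (auto simp: abs_mult)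

lemma has_finite_norm_max:
  "has_finite_norm f \<Longrightarrow> has_finite_norm g \<Longrightarrow> has_finite_norm (\<lambda>xs. max (f xs) (g xs))"
  by (rule has_finite_norm_dominated[of f g 1 1]) (auto simp: max_def)

lemma has_finite_norm_min:
  "has_finite_norm f \<Longrightarrow> has_finite_norm g \<Longrightarrow> has_finite_norm (\<lambda>xs. min (f xs) (g xs))"
  by (rule has_finite_norm_dominated[of f g 1 1]) (auto simp: min_def)

lemma fbl_norm_zero: "fbl_norm (\<lambda>_::'a::distrib_lattice \<Rightarrow> real. 0) = 0"
proof -
  have "fbl_sums (\<lambda>_::'a \<Rightarrow> real. 0) = {0}"
    using zero_in_fbl_sums[of "\<lambda>_. 0"] by (auto simp: fbl_sums_def)
  then show ?thesis unfolding fbl_norm_def by simp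
qed

lemma has_finite_norm_zero: "has_finite_norm (\<lambda>_. 0)"
  by (rule has_finite_norm_dominated[of "\<lambda>_. 0" "\<lambda>_. 0" 0 0])
    (auto simp: has_finite_norm_def fbl_sums_def)

lemma fbl_sums_delta_le_1: "s \<in> fbl_sums (delta x) \<Longrightarrow> s \<le> 1"
proof (elim fbl_sumsE)
  fix m :: nat and xs
  assume s: "s = (\<Sum>i<m. \<bar>delta x (xs i)\<bar>)" and "\<forall>i<m. xs i \<in> lstar"
    and "\<forall>x. (\<Sum>i<m. \<bar>xs i x\<bar>) \<le> 1"
  then show "s \<le> 1" by (simp add: delta_def)
qed

lemma has_finite_norm_delta: "has_finite_norm (delta x)"
  unfolding has_finite_norm_def using fbl_sums_delta_le_1 by (rule bdd_aboveI)

lemma fbl_norm_delta_le_1: "fbl_norm (delta x) \<le> 1"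
  unfolding fbl_norm_def using zero_in_fbl_sums fbl_sums_delta_le_1 by (blast intro: cSup_least)

lemma delta_inf: "delta (inf x y) = (\<lambda>xs. min (delta x xs) (delta y xs))"
  by (auto simp: delta_def lstar_def lattice_hom_real_def)

lemma delta_sup: "delta (sup x y) = (\<lambda>xs. max (delta x xs) (delta y xs))"
  by (auto simp: delta_def lstar_def lattice_hom_real_def)

lemma pos_homD:
  assumes "pos_hom f" "xs \<in> lstar" "0 \<le> c" "(\<lambda>x. c * xs x) \<in> lstar"
  shows "f (\<lambda>x. c * xs x) = c * f xs"
  using assms unfolding pos_hom_def by auto

lemma pos_hom_delta: "pos_hom (delta x)"
  unfolding pos_hom_def delta_def by auto

lemma pos_hom_zero: "pos_hom (\<lambda>_. 0)"
  unfolding pos_hom_def by auto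

lemma pos_hom_add: "pos_hom f \<Longrightarrow> pos_hom g \<Longrightarrow> pos_hom (\<lambda>xs. f xs + g xs)"
  unfolding pos_hom_def by (auto simp: algebra_simps)

lemma pos_hom_scale: "pos_hom f \<Longrightarrow> pos_hom (\<lambda>xs. c * f xs)"
  unfolding pos_hom_def by (auto simp: algebra_simps)

lemma pos_hom_max: "pos_hom f \<Longrightarrow> pos_hom g \<Longrightarrow> pos_hom (\<lambda>xs. max (f xs) (g xs))"
  unfolding pos_hom_def by (auto simp: max_mult_distrib_left)

lemma pos_hom_min: "pos_hom f \<Longrightarrow> pos_hom g \<Longrightarrow> pos_hom (\<lambda>xs. min (f xs) (g xs))"
  unfolding pos_hom_def by (auto simp: min_mult_distrib_left)

lemma fbl_gen_pos_hom_finite_norm: "f \<in> fbl_gen \<Longrightarrow> pos_hom f \<and> has_finite_norm f"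
  by (induction rule: fbl_gen.induct)
    (simp_all add: pos_hom_delta has_finite_norm_delta pos_hom_zero has_finite_norm_zero
      pos_hom_add has_finite_norm_add pos_hom_scale has_finite_norm_scale
      pos_hom_max has_finite_norm_max pos_hom_min has_finite_norm_min)

lemma fbl_gen_subset_FBL: "fbl_gen \<subseteq> FBL"
proof
  fix f :: "('a \<Rightarrow> real) \<Rightarrow> real"
  assume f: "f \<in> fbl_gen"
  have "fbl_norm (\<lambda>xs. f xs - f xs) < e" if "e > 0" for e
    using that by (simp add: fbl_norm_zero)
  then show "f \<in> FBL"
    using f fbl_gen_pos_hom_finite_norm[OF f] unfolding FBL_def by blast
qed

lemma has_finite_norm_FBL: "f \<in> FBL \<Longrightarrow> has_finite_norm f"
  and pos_hom_FBL: "f \<in> FBL \<Longrightarrow> pos_hom f"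
  by (simp_all add: FBL_def)

lemma FBL_add:
  assumes f: "f \<in> FBL" and g: "g \<in> FBL"
  shows "(\<lambda>xs. f xs + g xs) \<in> FBL"
proof -
  have "\<exists>h\<in>fbl_gen. fbl_norm (\<lambda>xs. f xs + g xs - h xs) < e" if "e > 0" for e
  proof -
    obtain f' where f': "f' \<in> fbl_gen" "fbl_norm (\<lambda>xs. f xs - f' xs) < e / 2"
      using f half_gt_zero[OF \<open>e > 0\<close>] unfolding FBL_def by blast
    obtain g' where g': "g' \<in> fbl_gen" "fbl_norm (\<lambda>xs. g xs - g' xs) < e / 2"
      using g half_gt_zero[OF \<open>e > 0\<close>] unfolding FBL_def by blast
    have d: "has_finite_norm (\<lambda>xs. f xs - f' xs)" "has_finite_norm (\<lambda>xs. g xs - g' xs)"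
      using f g f'(1) g'(1)
      by (simp_all add: has_finite_norm_diff has_finite_norm_FBL fbl_gen_pos_hom_finite_norm)
    have "fbl_norm (\<lambda>xs. f xs + g xs - (f' xs + g' xs))
        \<le> 1 * fbl_norm (\<lambda>xs. f xs - f' xs) + 1 * fbl_norm (\<lambda>xs. g xs - g' xs)"
      by (rule fbl_norm_dominated[OF d]) (simp_all add: abs_diff_triangle_ineq)
    then show ?thesis
      using f' g' by (intro bexI[of _ "\<lambda>xs. f' xs + g' xs"]) (auto intro: fbl_gen.gen_add)
  qed
  then show ?thesis
    using f g by (simp add: FBL_def pos_hom_add has_finite_norm_add)
qed

lemma FBL_scale:
  assumes f: "f \<in> FBL"
  shows "(\<lambda>xs. c * f xs) \<in> FBL"
proof -
  have "\<exists>h\<in>fbl_gen. fbl_norm (\<lambda>xs. c * f xs - h xs) < e" if "e > 0" for e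
  proof -
    have "e / (\<bar>c\<bar> + 1) > 0" using \<open>e > 0\<close> by simp
    then obtain f' where f': "f' \<in> fbl_gen" "fbl_norm (\<lambda>xs. f xs - f' xs) < e / (\<bar>c\<bar> + 1)"
      using f unfolding FBL_def by blast
    have d: "has_finite_norm (\<lambda>xs. f xs - f' xs)"
      using f f'(1) by (simp add: has_finite_norm_diff has_finite_norm_FBL fbl_gen_pos_hom_finite_norm)
    have "fbl_norm (\<lambda>xs. c * f xs - c * f' xs)
        \<le> \<bar>c\<bar> * fbl_norm (\<lambda>xs. f xs - f' xs) + 0 * fbl_norm (\<lambda>xs. f xs - f' xs)"
      by (rule fbl_norm_dominated[OF d d]) (auto simp: abs_mult right_diff_distrib[symmetric])
    also have "\<dots> \<le> \<bar>c\<bar> * (e / (\<bar>c\<bar> + 1)) + 0"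
      using f'(2) by (intro add_mono mult_left_mono) simp_all
    also have "\<dots> < e"
      using \<open>e > 0\<close> by (simp add: field_simps)
    finally show ?thesis
      using f'(1) by (intro bexI[of _ "\<lambda>xs. c * f' xs"]) (auto intro: fbl_gen.gen_scale)
  qed
  then show ?thesis
    using f by (simp add: FBL_def pos_hom_scale has_finite_norm_scale)
qed

lemma FBL_diff: "f \<in> FBL \<Longrightarrow> g \<in> FBL \<Longrightarrow> (\<lambda>xs. f xs - g xs) \<in> FBL"
  using FBL_add[OF _ FBL_scale, of f g "-1"] by simp

lemma delta_in_FBL: "delta x \<in> FBL"
  using fbl_gen_subset_FBL fbl_gen.gen_delta by blast

lemma FBL_eq_by_approximation:
  fixes a b C :: real
  assumes f: "f \<in> FBL" and "0 \<le> C"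
    and approx: "\<forall>g\<in>fbl_gen. \<bar>a - b\<bar> \<le> C * fbl_norm (\<lambda>xs. f xs - g xs)"
  shows "a = b"
proof (rule ccontr)
  assume "a \<noteq> b"
  then have "\<bar>a - b\<bar> / (C + 1) > 0" using \<open>0 \<le> C\<close> by simp
  then obtain g where g: "g \<in> fbl_gen" "fbl_norm (\<lambda>xs. f xs - g xs) < \<bar>a - b\<bar> / (C + 1)"
    using f unfolding FBL_def by blast
  have "\<bar>a - b\<bar> \<le> C * (\<bar>a - b\<bar> / (C + 1))"
    using approx g \<open>0 \<le> C\<close> by (meson less_eq_real_def mult_left_mono order_trans)
  also have "\<dots> < \<bar>a - b\<bar>"
    using \<open>a \<noteq> b\<close> \<open>0 \<le> C\<close> by (simp add: field_simps)
  finally show False by simp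
qed

lemma op_bounded_nonneg:
  assumes "op_bounded T"
  shows "\<exists>K\<ge>0. \<forall>f\<in>FBL. fbl_norm (T f) \<le> K * fbl_norm f"
proof -
  obtain K where K: "\<And>f. f \<in> FBL \<Longrightarrow> fbl_norm (T f) \<le> K * fbl_norm f"
    using assms unfolding op_bounded_def by blast
  have "fbl_norm (T f) \<le> \<bar>K\<bar> * fbl_norm f" if "f \<in> FBL" for f
    using K[OF that] fbl_norm_nonneg[OF has_finite_norm_FBL[OF that]]
    by (meson abs_ge_self mult_right_mono order_trans)
  then show ?thesis by (intro exI[of _ "\<bar>K\<bar>"]) simp
qed

lemma fbl_norm_le_op_norm:
  assumes "op_bounded T" and f: "f \<in> FBL" "fbl_norm f \<le> 1"
  shows "fbl_norm (T f) \<le> op_norm T"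
proof -
  obtain K where "0 \<le> K" and K: "\<And>f. f \<in> FBL \<Longrightarrow> fbl_norm (T f) \<le> K * fbl_norm f"
    using op_bounded_nonneg[OF assms(1)] by blast
  have "fbl_norm (T g) \<le> K" if "g \<in> FBL" "fbl_norm g \<le> 1" for g
    using K[OF that(1)] mult_left_le[OF that(2) \<open>0 \<le> K\<close>] by linarith
  then have "bdd_above {fbl_norm (T g) | g. g \<in> FBL \<and> fbl_norm g \<le> 1}"
    by (intro bdd_aboveI[where M = K]) blast
  then show ?thesis
    unfolding op_norm_def using f by (auto intro: cSup_upper)
qed

lemma fbl_lattice_hom_FBL: "fbl_lattice_hom T \<Longrightarrow> f \<in> FBL \<Longrightarrow> T f \<in> FBL"
  and fbl_lattice_hom_scale:
    "fbl_lattice_hom T \<Longrightarrow> f \<in> FBL \<Longrightarrow> T (\<lambda>xs. c * f xs) = (\<lambda>ys. c * T f ys)"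
  unfolding fbl_lattice_hom_def by blast+

lemma
  assumes "fbl_lattice_hom T" and "f \<in> FBL" "g \<in> FBL"
  shows fbl_lattice_hom_add: "T (\<lambda>xs. f xs + g xs) = (\<lambda>ys. T f ys + T g ys)"
    and fbl_lattice_hom_max: "T (\<lambda>xs. max (f xs) (g xs)) = (\<lambda>ys. max (T f ys) (T g ys))"
    and fbl_lattice_hom_min: "T (\<lambda>xs. min (f xs) (g xs)) = (\<lambda>ys. min (T f ys) (T g ys))"
  using assms unfolding fbl_lattice_hom_def by blast+

lemma fbl_lattice_hom_zero:
  assumes "fbl_lattice_hom T"
  shows "T (\<lambda>_. 0) = (\<lambda>_. 0)"
  using fbl_lattice_hom_scale[OF assms delta_in_FBL, of 0 undefined] by simp

lemma fbl_lattice_hom_diff: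
  assumes "fbl_lattice_hom T" and "f \<in> FBL" "g \<in> FBL"
  shows "T (\<lambda>xs. f xs - g xs) = (\<lambda>ys. T f ys - T g ys)"
  using fbl_lattice_hom_add[OF assms(1,2) FBL_scale[OF assms(3)], of "-1"]
    fbl_lattice_hom_scale[OF assms(1,3), of "-1"] by simp

lemma lattice_hom_real_Phi:
  assumes "fbl_lattice_hom T"
  shows "lattice_hom_real (Phi T ys)"
  unfolding lattice_hom_real_def Phi_def delta_inf delta_sup
  by (simp add: fbl_lattice_hom_max[OF assms delta_in_FBL delta_in_FBL]
      fbl_lattice_hom_min[OF assms delta_in_FBL delta_in_FBL])

lemma abs_Phi_le_op_norm:
  assumes "fbl_lattice_hom T" "op_bounded T" and "ys \<in> lstar"
  shows "\<bar>Phi T ys x\<bar> \<le> op_norm T"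
proof -
  have "T (delta x) \<in> FBL"
    using assms(1) delta_in_FBL by (rule fbl_lattice_hom_FBL)
  then have "\<bar>Phi T ys x\<bar> \<le> fbl_norm (T (delta x))"
    unfolding Phi_def using assms(3) by (simp add: abs_le_fbl_norm has_finite_norm_FBL)
  also have "\<dots> \<le> op_norm T"
    using assms(2) delta_in_FBL fbl_norm_delta_le_1 by (rule fbl_norm_le_op_norm)
  finally show ?thesis .
qed

lemma Phi_in_lstar:
  assumes "fbl_lattice_hom T" "op_bounded T" "op_norm T \<le> 1" and "ys \<in> lstar"
  shows "Phi T ys \<in> lstar"
  using lattice_hom_real_Phi[OF assms(1)] abs_Phi_le_op_norm[OF assms(1,2,4)] assms(3)
  unfolding lstar_def by (auto intro: order_trans[OF _ assms(3)])

lemma Phi_scale: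
  assumes "fbl_lattice_hom T" and "ys \<in> lstar" "0 \<le> c" "(\<lambda>y. c * ys y) \<in> lstar"
  shows "Phi T (\<lambda>y. c * ys y) = (\<lambda>x. c * Phi T ys x)"
proof (rule ext)
  fix x
  have "pos_hom (T (delta x))"
    by (rule pos_hom_FBL[OF fbl_lattice_hom_FBL[OF assms(1) delta_in_FBL]])
  then show "Phi T (\<lambda>y. c * ys y) x = c * Phi T ys x"
    unfolding Phi_def using assms(2-4) by (rule pos_homD)
qed

lemma fbl_lattice_hom_eval_fbl_gen:
  assumes hom: "fbl_lattice_hom T" and P: "Phi T ys \<in> lstar" and "g \<in> fbl_gen"
  shows "T g ys = g (Phi T ys)"
  using \<open>g \<in> fbl_gen\<close>
proof (induction rule: fbl_gen.induct)
  case (gen_delta x)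
  show ?case using P by (simp add: Phi_def delta_def)
next
  case gen_zero
  show ?case by (simp add: fbl_lattice_hom_zero[OF hom])
next
  case (gen_add f g)
  then have "f \<in> FBL" "g \<in> FBL" using fbl_gen_subset_FBL by auto
  then show ?case by (simp add: fbl_lattice_hom_add[OF hom] gen_add.IH)
next
  case (gen_scale f c)
  then have "f \<in> FBL" using fbl_gen_subset_FBL by auto
  then show ?case by (simp add: fbl_lattice_hom_scale[OF hom] gen_scale.IH)
next
  case (gen_sup f g)
  then have "f \<in> FBL" "g \<in> FBL" using fbl_gen_subset_FBL by auto
  then show ?case by (simp add: fbl_lattice_hom_max[OF hom] gen_sup.IH)
next
  case (gen_inf f g)
  then have "f \<in> FBL" "g \<in> FBL" using fbl_gen_subset_FBL by auto
  then show ?case by (simp add: fbl_lattice_hom_min[OF hom] gen_inf.IH)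
qed

lemma fbl_lattice_hom_eval:
  assumes hom: "fbl_lattice_hom T" and "op_bounded T" "op_norm T \<le> 1"
    and f: "f \<in> FBL" and ys: "ys \<in> lstar"
  shows "T f ys = f (Phi T ys)"
proof -
  let ?P = "Phi T ys"
  have P: "?P \<in> lstar" using Phi_in_lstar assms by blast
  obtain K where "0 \<le> K" and K: "\<And>f. f \<in> FBL \<Longrightarrow> fbl_norm (T f) \<le> K * fbl_norm f"
    using op_bounded_nonneg[OF assms(2)] by blast
  have "\<bar>T f ys - f ?P\<bar> \<le> (K + 1) * fbl_norm (\<lambda>xs. f xs - g xs)" if g: "g \<in> fbl_gen" for g
  proof -
    let ?h = "\<lambda>xs. f xs - g xs"
    have h: "?h \<in> FBL" using f g fbl_gen_subset_FBL by (blast intro: FBL_diff)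
    have Th: "T ?h \<in> FBL" using hom h by (rule fbl_lattice_hom_FBL)
    have "T f ys - f ?P = T ?h ys - ?h ?P"
      using fbl_lattice_hom_diff[OF hom f] fbl_lattice_hom_eval_fbl_gen[OF hom P g] g
        fbl_gen_subset_FBL by auto
    also have "\<bar>\<dots>\<bar> \<le> fbl_norm (T ?h) + fbl_norm ?h"
      using abs_le_fbl_norm[OF ys has_finite_norm_FBL[OF Th]]
        abs_le_fbl_norm[OF P has_finite_norm_FBL[OF h]] by linarith
    also have "\<dots> \<le> (K + 1) * fbl_norm ?h"
      using K[OF h] by (simp add: distrib_right)
    finally show ?thesis .
  qed
  then show ?thesis
    using \<open>0 \<le> K\<close> by (intro FBL_eq_by_approximation[OF f, of "K + 1"]) auto
qed

theorem mainTheorem17: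
  fixes T :: "(('a::distrib_lattice \<Rightarrow> real) \<Rightarrow> real) \<Rightarrow> (('b::distrib_lattice \<Rightarrow> real) \<Rightarrow> real)"
  assumes hom: "fbl_lattice_hom T"
    and bdd: "op_bounded T"
  shows "(\<forall>ys\<in>(lstar::('b \<Rightarrow> real) set). lattice_hom_real (Phi T ys))
    \<and> (\<forall>ys\<in>(lstar::('b \<Rightarrow> real) set). \<forall>x. \<bar>Phi T ys x\<bar> \<le> op_norm T)
    \<and> (op_norm T \<le> 1 \<longrightarrow> (\<forall>ys\<in>(lstar::('b \<Rightarrow> real) set). Phi T ys \<in> (lstar::('a \<Rightarrow> real) set)))
    \<and> (\<forall>ys\<in>(lstar::('b \<Rightarrow> real) set). \<forall>c::real. c \<ge> 0 \<longrightarrow> (\<lambda>y. c * ys y) \<in> lstar \<longrightarrow>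
          Phi T (\<lambda>y. c * ys y) = (\<lambda>x. c * Phi T ys x))
    \<and> (op_norm T \<le> 1 \<longrightarrow>
          (\<forall>f\<in>(FBL::(('a \<Rightarrow> real) \<Rightarrow> real) set). \<forall>ys\<in>(lstar::('b \<Rightarrow> real) set). T f ys = f (Phi T ys)))"
  using lattice_hom_real_Phi[OF hom] abs_Phi_le_op_norm[OF hom bdd] Phi_in_lstar[OF hom bdd]
    Phi_scale[OF hom] fbl_lattice_hom_eval[OF hom bdd]
  by simp

end
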